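(* For all $x\in\mathbb{C}$ and all integers $n\ge0$, \[ \sum_{k=0}^n x^k\big(L_{2k}+(3x-2)F_{2k+2}\big)=3x^{n+1}F_{2n+2},\qquad \sum_{k=0}^n x^k\big(5F_{2k}+(3x-2)L_{2k+2}\big)=3\big(x^{n+1}L_{2n+2}-2\big), \] \[ \sum_{k=0}^n x^k\big(Q_{2k}+(3x-1)P_{2k+2}\big)=3x^{n+1}P_{2n+2},\qquad \sum_{k=0}^n x^k\big(8P_{2k}+(3x-1)Q_{2k+2}\big)=3\big(x^{n+1}Q_{2n+2}-2\big). \]
   Context: $F_n,L_n$ are the Fibonacci and Lucas numbers ($F_0=0,F_1=1,L_0=2,L_1=1$, $W_n=W_{n-1}+W_{n-2}$). $P_n,Q_n$ are the Pell and Pell–Lucas numbers: $P_0=0$, $P_1=1$, $Q_0=2$, $Q_1=2$, $W_n=2W_{n-1}+W_{n-2}$. *)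

theory Defs
  imports Complex_Main
begin

fun fib :: "nat \<Rightarrow> int" where
  "fib 0 = 0" | "fib (Suc 0) = 1" | "fib (Suc (Suc n)) = fib (Suc n) + fib n"

fun lucas :: "nat \<Rightarrow> int" where
  "lucas 0 = 2" | "lucas (Suc 0) = 1" | "lucas (Suc (Suc n)) = lucas (Suc n) + lucas n"

fun pell :: "nat \<Rightarrow> int" where
  "pell 0 = 0" | "pell (Suc 0) = 1" | "pell (Suc (Suc n)) = 2 * pell (Suc n) + pell n"

fun pell_lucas :: "nat \<Rightarrow> int" where
  "pell_lucas 0 = 2" | "pell_lucas (Suc 0) = 2"
| "pell_lucas (Suc (Suc n)) = 2 * pell_lucas (Suc n) + pell_lucas n"

end

theory Submission
  imports Defs
begin

text \<open>If \<open>a k = c * b (k+1) - d * b k\<close>, then the summand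
  \<open>x^k * (a k + (d*x - c) * b (k+1))\<close> equals \<open>d * (x^(k+1) * b (k+1) - x^k * b k)\<close>,
  so the sum telescopes. Each identity of the theorem is of this shape with \<open>d = 3\<close> and
  \<open>b k\<close> an even-indexed Fibonacci, Lucas, Pell or Pell-Lucas number; the required relation
  \<open>a k = c * b (k+1) - 3 * b k\<close> is a linear identity between neighbouring terms that holds
  at every index, not only at even ones.\<close>

lemma sum_power_telescope:
  fixes a b :: "nat \<Rightarrow> 'a::comm_ring_1"
  assumes "\<And>k. a k = c * b (Suc k) - d * b k"
  shows "(\<Sum>k=0..n. x ^ k * (a k + (d * x - c) * b (Suc k)))
           = d * (x ^ Suc n * b (Suc n) - b 0)"
proof -
  have "x ^ k * (a k + (d * x - c) * b (Suc k))
          = d * x ^ Suc k * b (Suc k) - d * x ^ k * b k" for k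
    by (simp add: assms algebra_simps)
  then show ?thesis
    using sum_Suc_diff[of 0 n "\<lambda>k. d * x ^ k * b k"] by (simp add: right_diff_distrib)
qed

lemma lucas_eq_fib: "lucas n = 2 * fib (Suc (Suc n)) - 3 * fib n"
  by (induction n rule: lucas.induct) simp_all

lemma fib_eq_lucas: "5 * fib n = 2 * lucas (Suc (Suc n)) - 3 * lucas n"
  by (induction n rule: fib.induct) simp_all

lemma pell_lucas_eq_pell: "pell_lucas n = pell (Suc (Suc n)) - 3 * pell n"
  by (induction n rule: pell_lucas.induct) simp_all

lemma pell_eq_pell_lucas: "8 * pell n = pell_lucas (Suc (Suc n)) - 3 * pell_lucas n"
  by (induction n rule: pell.induct) simp_all

theorem corollary7:
  fixes x :: complex and n :: nat
  shows "((\<Sum>k=0..n. x ^ k * (of_int (lucas (2*k)) + (3*x - 2) * of_int (fib (2*k+2))))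
           = 3 * x ^ (n+1) * of_int (fib (2*n+2))) \<and>
    ((\<Sum>k=0..n. x ^ k * (5 * of_int (fib (2*k)) + (3*x - 2) * of_int (lucas (2*k+2))))
           = 3 * (x ^ (n+1) * of_int (lucas (2*n+2)) - 2)) \<and>
    ((\<Sum>k=0..n. x ^ k * (of_int (pell_lucas (2*k)) + (3*x - 1) * of_int (pell (2*k+2))))
           = 3 * x ^ (n+1) * of_int (pell (2*n+2))) \<and>
    ((\<Sum>k=0..n. x ^ k * (8 * of_int (pell (2*k)) + (3*x - 1) * of_int (pell_lucas (2*k+2))))
           = 3 * (x ^ (n+1) * of_int (pell_lucas (2*n+2)) - 2))"
proof -
  note telescope = sum_power_telescope[where d = 3 and x = x and n = n]
  show ?thesis
    using telescope[where c = 2 and a = "\<lambda>k. of_int (lucas (2 * k))"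
                            and b = "\<lambda>k. of_int (fib (2 * k))"]
      telescope[where c = 2 and a = "\<lambda>k. 5 * of_int (fib (2 * k))"
                            and b = "\<lambda>k. of_int (lucas (2 * k))"]
      telescope[where c = 1 and a = "\<lambda>k. of_int (pell_lucas (2 * k))"
                            and b = "\<lambda>k. of_int (pell (2 * k))"]
      telescope[where c = 1 and a = "\<lambda>k. 8 * of_int (pell (2 * k))"
                            and b = "\<lambda>k. of_int (pell_lucas (2 * k))"]
    by (simp add: lucas_eq_fib fib_eq_lucas pell_lucas_eq_pell pell_eq_pell_lucas)
qed

end
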